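(* Let $S=\{X_1,\dots,X_n\}$ be a dataset, $H$ a class of binary classifiers, and $W_1,\dots,W_n$ weights with $1\le W_i\le\lambda$ for all $i$. Then for every $h\in H$, the weighted disagreement coefficient satisfies $\theta^W_h\le\lambda^2\theta_h$, where $\theta_h$ is the (unweighted) disagreement coefficient of $h$.
   Context: Unweighted: $D(h_1,h_2)=\frac1n\sum_i\mathbb{I}(h_1(X_i)\ne h_2(X_i))$, $B_H(h,r)=\{h'\in H:D(h,h')\le r\}$, $\mathrm{DIS}(V)=\{X_i:\exists h_1,h_2\in V,h_1(X_i)\ne h_2(X_i)\}$, $\theta_h=\sup_{r>0}\frac{|\mathrm{DIS}(B_H(h,r))|}{rn}$. Weighted: $D^W(h_1,h_2)=\frac{\sum_i W_i\mathbb{I}(h_1(X_i)\ne h_2(X_i))}{\sum_i W_i}$, $B^W_H(h,r)=\{h'\in H:D^W(h,h')\le r\}$, and $\theta^W_h=\sup_{r>0}\frac{\sum_{i: X_i\in\mathrm{DIS}(B^W_H(h,r))}W_i}{r\sum_{i=1}^nW_i}$. *)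

theory Defs
  imports Complex_Main
begin

definition dis_dist :: "nat \<Rightarrow> (nat \<Rightarrow> 'a) \<Rightarrow> ('a \<Rightarrow> bool) \<Rightarrow> ('a \<Rightarrow> bool) \<Rightarrow> real" where
  "dis_dist n X h1 h2 = (\<Sum>i<n. if h1 (X i) \<noteq> h2 (X i) then 1 else 0) / real n"

definition dis_ball :: "('a \<Rightarrow> bool) set \<Rightarrow> nat \<Rightarrow> (nat \<Rightarrow> 'a) \<Rightarrow> ('a \<Rightarrow> bool) \<Rightarrow> real \<Rightarrow> ('a \<Rightarrow> bool) set" where
  "dis_ball H n X h r = {h' \<in> H. dis_dist n X h h' \<le> r}"

definition DIS :: "nat \<Rightarrow> (nat \<Rightarrow> 'a) \<Rightarrow> ('a \<Rightarrow> bool) set \<Rightarrow> nat set" where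
  "DIS n X V = {i. i < n \<and> (\<exists>h1\<in>V. \<exists>h2\<in>V. h1 (X i) \<noteq> h2 (X i))}"

definition dis_coeff :: "('a \<Rightarrow> bool) set \<Rightarrow> nat \<Rightarrow> (nat \<Rightarrow> 'a) \<Rightarrow> ('a \<Rightarrow> bool) \<Rightarrow> real" where
  "dis_coeff H n X h =
     (SUP r\<in>{0<..}. real (card (DIS n X (dis_ball H n X h r))) / (r * real n))"

definition wdis_dist :: "nat \<Rightarrow> (nat \<Rightarrow> 'a) \<Rightarrow> (nat \<Rightarrow> real) \<Rightarrow> ('a \<Rightarrow> bool) \<Rightarrow> ('a \<Rightarrow> bool) \<Rightarrow> real" where
  "wdis_dist n X W h1 h2 =
     (\<Sum>i<n. W i * (if h1 (X i) \<noteq> h2 (X i) then 1 else 0)) / (\<Sum>i<n. W i)"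

definition wdis_ball :: "('a \<Rightarrow> bool) set \<Rightarrow> nat \<Rightarrow> (nat \<Rightarrow> 'a) \<Rightarrow> (nat \<Rightarrow> real) \<Rightarrow> ('a \<Rightarrow> bool) \<Rightarrow> real \<Rightarrow> ('a \<Rightarrow> bool) set" where
  "wdis_ball H n X W h r = {h' \<in> H. wdis_dist n X W h h' \<le> r}"

definition wdis_coeff :: "('a \<Rightarrow> bool) set \<Rightarrow> nat \<Rightarrow> (nat \<Rightarrow> 'a) \<Rightarrow> (nat \<Rightarrow> real) \<Rightarrow> ('a \<Rightarrow> bool) \<Rightarrow> real" where
  "wdis_coeff H n X W h =
     (SUP r\<in>{0<..}. (\<Sum>i\<in>DIS n X (wdis_ball H n X W h r). W i) / (r * (\<Sum>i<n. W i)))"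

end

theory Submission
  imports Defs
begin

text \<open>With weights in [1, \<lambda>] the weighted distance dominates the unweighted one up to a
  factor \<lambda>, so the weighted ball of radius r lies in the unweighted ball of radius \<lambda> r.
  Hence the weighted mass of its disagreement region is at most \<lambda> times the size of the
  unweighted one, while the total weight is at least n; this costs one factor \<lambda>, and the
  rescaling of the radius from r to \<lambda> r costs the other.\<close>

lemma DIS_mono: "V \<subseteq> V' \<Longrightarrow> DIS n X V \<subseteq> DIS n X V'"
  unfolding DIS_def by blast

lemma DIS_subset_lessThan: "DIS n X V \<subseteq> {..<n}"
  unfolding DIS_def by auto

lemma finite_DIS: "finite (DIS n X V)"
  using finite_subset[OF DIS_subset_lessThan] by blast

lemma card_DIS_le: "card (DIS n X V) \<le> n"
  using card_mono[OF _ DIS_subset_lessThan] by fastforce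

lemma dis_dist_ge_inverse:
  assumes "i < n" and "h (X i) \<noteq> h' (X i)"
  shows "1 \<le> real n * dis_dist n X h h'"
proof -
  have "(\<Sum>k\<in>{i}. if h (X k) \<noteq> h' (X k) then 1 else 0 :: real)
      \<le> (\<Sum>k<n. if h (X k) \<noteq> h' (X k) then 1 else 0)"
    by (rule sum_mono2) (use assms in auto)
  then show ?thesis
    using assms by (simp add: dis_dist_def)
qed

lemma DIS_dis_ball_ratio_le:
  assumes "r > 0"
  shows "real (card (DIS n X (dis_ball H n X h r))) / (r * real n) \<le> real n"
proof (cases "DIS n X (dis_ball H n X h r) = {}")
  case True
  then show ?thesis by simp
next
  case False
  then obtain i h' where "i < n" "h' \<in> dis_ball H n X h r" "h (X i) \<noteq> h' (X i)"
    unfolding DIS_def by blast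
  then have "1 \<le> real n * dis_dist n X h h'" and "dis_dist n X h h' \<le> r"
    by (auto intro: dis_dist_ge_inverse simp: dis_ball_def)
  then have "1 \<le> r * real n"
    using mult_left_mono[of "dis_dist n X h h'" r "real n"] by (simp add: mult.commute)
  have "real (card (DIS n X (dis_ball H n X h r))) / (r * real n) \<le> real n / (r * real n)"
    using card_DIS_le \<open>1 \<le> r * real n\<close> by (intro divide_right_mono) auto
  also have "\<dots> \<le> real n"
    using \<open>1 \<le> r * real n\<close> assms by (simp add: divide_le_eq mult.commute)
  finally show ?thesis .
qed

text \<open>Without this bound the real-valued SUP defining the unweighted coefficient would be
  an unspecified junk value, and the theorem would say nothing.\<close>

lemma bdd_above_DIS_dis_ball_ratio:
  "bdd_above ((\<lambda>r. real (card (DIS n X (dis_ball H n X h r))) / (r * real n)) ` {0<..})"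
  by (rule bdd_aboveI2[where M = "real n"]) (auto intro: DIS_dis_ball_ratio_le)

lemma wdis_dist_nonneg:
  assumes "\<And>i. i < n \<Longrightarrow> 0 \<le> W i"
  shows "0 \<le> wdis_dist n X W h h'"
  unfolding wdis_dist_def using assms by (auto intro!: sum_nonneg divide_nonneg_nonneg)

lemma dis_dist_le_wdis_dist:
  assumes "\<And>i. i < n \<Longrightarrow> 1 \<le> W i \<and> W i \<le> lam"
  shows "dis_dist n X h h' \<le> lam * wdis_dist n X W h h'"
proof (cases "n = 0")
  case True
  then show ?thesis by (simp add: dis_dist_def wdis_dist_def)
next
  case False
  define c where "c k = (if h (X k) \<noteq> h' (X k) then 1 else 0 :: real)" for k
  have "real n \<le> (\<Sum>i<n. W i)"
    using sum_bounded_below[of "{..<n}" 1 W] assms by simp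
  then have total_pos: "0 < (\<Sum>i<n. W i)"
    using False by linarith
  have "(\<Sum>i<n. W i) \<le> real n * lam"
    using sum_bounded_above[of "{..<n}" W lam] assms by simp
  have "(\<Sum>k<n. c k) \<le> (\<Sum>k<n. W k * c k)"
    by (rule sum_mono) (use assms in \<open>auto simp: c_def\<close>)
  also have "\<dots> = wdis_dist n X W h h' * (\<Sum>i<n. W i)"
    using total_pos by (simp add: wdis_dist_def c_def)
  also have "\<dots> \<le> wdis_dist n X W h h' * (real n * lam)"
    using \<open>(\<Sum>i<n. W i) \<le> real n * lam\<close> wdis_dist_nonneg assms
    by (metis mult_left_mono order.trans zero_le_one)
  finally show ?thesis
    using False by (simp add: dis_dist_def c_def divide_le_eq mult_ac)
qed

lemma wdis_ball_subset_dis_ball: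
  assumes "\<And>i. i < n \<Longrightarrow> 1 \<le> W i \<and> W i \<le> lam" and "0 \<le> lam"
  shows "wdis_ball H n X W h r \<subseteq> dis_ball H n X h (lam * r)"
  using dis_dist_le_wdis_dist[OF assms(1)] mult_left_mono[OF _ assms(2)]
  unfolding wdis_ball_def dis_ball_def by (fastforce intro: order_trans)

lemma wdis_ratio_le_dis_ratio:
  assumes W: "\<And>i. i < n \<Longrightarrow> 1 \<le> W i \<and> W i \<le> lam" and "n > 0" and "r > 0"
  shows "(\<Sum>i\<in>DIS n X (wdis_ball H n X W h r). W i) / (r * (\<Sum>i<n. W i))
    \<le> lam^2 * (real (card (DIS n X (dis_ball H n X h (lam * r)))) / (lam * r * real n))"
proof -
  define D where "D = DIS n X (wdis_ball H n X W h r)"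
  define B where "B = DIS n X (dis_ball H n X h (lam * r))"
  have "1 \<le> lam"
    using W[OF \<open>n > 0\<close>] by linarith
  have D_lt: "i < n" if "i \<in> D" for i
    using that DIS_subset_lessThan unfolding D_def by blast
  have "D \<subseteq> B"
    unfolding D_def B_def using \<open>1 \<le> lam\<close>
    by (intro DIS_mono wdis_ball_subset_dis_ball W) auto
  then have "card D \<le> card B"
    unfolding B_def by (rule card_mono[OF finite_DIS])
  have "(\<Sum>i\<in>D. W i) \<le> real (card D) * lam"
    using sum_bounded_above[of D W lam] W D_lt by blast
  also have "\<dots> \<le> real (card B) * lam"
    using \<open>card D \<le> card B\<close> \<open>1 \<le> lam\<close> by simp
  finally have mass_le: "(\<Sum>i\<in>D. W i) \<le> real (card B) * lam" .
  have "real n \<le> (\<Sum>i<n. W i)"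
    using sum_bounded_below[of "{..<n}" 1 W] W by simp
  have "0 \<le> (\<Sum>i\<in>D. W i)"
    using W D_lt by (force intro: sum_nonneg)
  then have "(\<Sum>i\<in>D. W i) / (r * (\<Sum>i<n. W i)) \<le> (\<Sum>i\<in>D. W i) / (r * real n)"
    using \<open>real n \<le> (\<Sum>i<n. W i)\<close> \<open>n > 0\<close> \<open>r > 0\<close> by (intro divide_left_mono) auto
  also have "\<dots> \<le> real (card B) * lam / (r * real n)"
    using mass_le \<open>n > 0\<close> \<open>r > 0\<close> by (intro divide_right_mono) auto
  also have "\<dots> = lam^2 * (real (card B) / (lam * r * real n))"
    using \<open>1 \<le> lam\<close> by (simp add: power2_eq_square field_simps)
  finally show ?thesis
    unfolding D_def B_def .
qed

theorem theorem11:
  fixes H :: "('a \<Rightarrow> bool) set" and n :: nat and X :: "nat \<Rightarrow> 'a"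
    and W :: "nat \<Rightarrow> real" and lam :: real and h :: "'a \<Rightarrow> bool"
  assumes "\<And>i. i < n \<Longrightarrow> 1 \<le> W i \<and> W i \<le> lam"
    and "h \<in> H"
  shows "wdis_coeff H n X W h \<le> lam^2 * dis_coeff H n X h"
proof (cases "n = 0")
  case True
  then show ?thesis
    by (simp add: wdis_coeff_def dis_coeff_def DIS_def)
next
  case False
  then have "1 \<le> lam"
    using assms(1)[of 0] by simp
  show ?thesis
    unfolding wdis_coeff_def
  proof (rule cSUP_least)
    fix r :: real
    assume "r \<in> {0<..}"
    then have "lam * r \<in> {0<..}"
      using \<open>1 \<le> lam\<close> by simp
    then have "real (card (DIS n X (dis_ball H n X h (lam * r)))) / (lam * r * real n)
        \<le> dis_coeff H n X h"
      unfolding dis_coeff_def by (rule cSUP_upper[OF _ bdd_above_DIS_dis_ball_ratio])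
    then have "lam^2 * (real (card (DIS n X (dis_ball H n X h (lam * r)))) / (lam * r * real n))
        \<le> lam^2 * dis_coeff H n X h"
      by (rule mult_left_mono) simp
    moreover have "r > 0" "n > 0"
      using \<open>r \<in> {0<..}\<close> False by auto
    ultimately show "(\<Sum>i\<in>DIS n X (wdis_ball H n X W h r). W i) / (r * (\<Sum>i<n. W i))
        \<le> lam^2 * dis_coeff H n X h"
      using wdis_ratio_le_dis_ratio[of n W lam] assms(1) by (blast intro: order_trans)
  qed simp
qed

end
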